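(* Let $P$ be a finite poset and $R$ a consistent restriction function on $P$. Then there is a bijection between the set of meet-irreducible elements of the lattice $\mathrm{Inc}^R(P)$ and the set of pairs $(p,k)$ with $p\in P$ and $k\in R(p)\setminus\{\max R(p)\}$.
   Context: A restriction function assigns to each $p\in P$ a nonempty finite set $R(p)\subseteq\mathbb{Z}$. $\mathrm{Inc}^R(P)$ is the set of $f:P\to\mathbb{Z}$ with $f(p)\in R(p)$ and $p_1<p_2\Rightarrow f(p_1)<f(p_2)$, ordered by $f\le g$ iff $f(p)\le g(p)$ for all $p$; it is a distributive lattice with pointwise min and max as meet and join. An element $x$ is meet-irreducible if it is not the top element and $x=y\wedge z$ implies $x\in\{y,z\}$. $R$ is consistent if for every cover $x\lessdot y$ in $P$, $\min R(x)<\min R(y)$ and $\max R(x)<\max R(y)$. *)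

theory Defs
  imports Main
begin

text \<open>A finite poset P is modelled as a finite type with a partial order.
  A restriction function assigns to each element a set of integers.\<close>

definition covers :: "'a::order \<Rightarrow> 'a \<Rightarrow> bool" where
  "covers x y \<longleftrightarrow> x < y \<and> \<not> (\<exists>z. x < z \<and> z < y)"

definition restriction :: "('a \<Rightarrow> int set) \<Rightarrow> bool" where
  "restriction R \<longleftrightarrow> (\<forall>p. finite (R p) \<and> R p \<noteq> {})"

definition consistent :: "('a::order \<Rightarrow> int set) \<Rightarrow> bool" where
  "consistent R \<longleftrightarrow> (\<forall>x y. covers x y \<longrightarrow> Min (R x) < Min (R y) \<and> Max (R x) < Max (R y))"

text \<open>Inc^R(P), ordered pointwise (the standard order on functions).\<close>
definition Inc :: "('a::order \<Rightarrow> int set) \<Rightarrow> ('a \<Rightarrow> int) set" where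
  "Inc R = {f. (\<forall>p. f p \<in> R p) \<and> (\<forall>p q. p < q \<longrightarrow> f p < f q)}"

text \<open>Meet-irreducible elements of a lattice L of functions with pointwise meet (inf).
  Not the top element means: some element of L is not below x.\<close>
definition meet_irreducible :: "('a \<Rightarrow> int) set \<Rightarrow> ('a \<Rightarrow> int) \<Rightarrow> bool" where
  "meet_irreducible L x \<longleftrightarrow> x \<in> L \<and> \<not> (\<forall>y\<in>L. y \<le> x) \<and>
     (\<forall>y\<in>L. \<forall>z\<in>L. x = inf y z \<longrightarrow> x = y \<or> x = z)"

end

theory Submission
  imports Defs
begin

text \<open>Call a point p raisable for m \<in> Inc R if m p can be replaced by a larger value
  without leaving Inc R. Then m is meet-irreducible iff it has exactly one raisable
  point p: two raisable points exhibit m as the meet of the two raisings, while a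
  single one makes m the greatest element of Inc R with value at most m p at p.
  The bijection is m \<mapsto> (p, m p). Its inverse sends (p, k) with k < Max (R p) to the
  greatest f with f p \<le> k, which exists because Inc R is finite, closed under
  pointwise max, and (by consistency) contains an f with f p = k that is maximal
  strictly above p.\<close>

lemma less_if_covers_less:
  fixes F :: "'a::{finite,order} \<Rightarrow> 'b::order"
  assumes cov: "\<And>x y. covers x y \<Longrightarrow> F x < F y"
  shows "x < y \<Longrightarrow> F x < F y"
proof (induction "card {z. x < z \<and> z < y}" arbitrary: x y rule: less_induct)
  case (less x y)
  show ?case
  proof (cases "covers x y")
    case True
    then show ?thesis using cov by blast
  next
    case False
    then obtain z where z: "x < z" "z < y" using less.prems unfolding covers_def by blast
    have "card {w. x < w \<and> w < z} < card {w. x < w \<and> w < y}"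
      by (rule psubset_card_mono) (use z in \<open>auto intro: order.strict_trans\<close>)
    moreover have "card {w. z < w \<and> w < y} < card {w. x < w \<and> w < y}"
      by (rule psubset_card_mono) (use z in \<open>auto intro: order.strict_trans\<close>)
    ultimately have "F x < F z" "F z < F y" using less.hyps z by blast+
    then show ?thesis by order
  qed
qed

lemma consistent_Min_less:
  fixes R :: "'a::{finite,order} \<Rightarrow> int set"
  shows "consistent R \<Longrightarrow> x < y \<Longrightarrow> Min (R x) < Min (R y)"
  using less_if_covers_less[of "\<lambda>x. Min (R x)"] unfolding consistent_def by blast

lemma consistent_Max_less:
  fixes R :: "'a::{finite,order} \<Rightarrow> int set"
  shows "consistent R \<Longrightarrow> x < y \<Longrightarrow> Max (R x) < Max (R y)"
  using less_if_covers_less[of "\<lambda>x. Max (R x)"] unfolding consistent_def by blast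

lemma restriction_Min_Max:
  assumes "restriction R"
  shows "Min (R p) \<in> R p" "Max (R p) \<in> R p"
    and "k \<in> R p \<Longrightarrow> Min (R p) \<le> k" "k \<in> R p \<Longrightarrow> k \<le> Max (R p)"
  using assms unfolding restriction_def by auto

lemma IncI:
  "(\<And>p. f p \<in> R p) \<Longrightarrow> (\<And>p q. p < q \<Longrightarrow> f p < f q) \<Longrightarrow> f \<in> Inc R"
  unfolding Inc_def by blast

lemma Inc_in_R: "f \<in> Inc R \<Longrightarrow> f p \<in> R p"
  unfolding Inc_def by blast

lemma Inc_less: "f \<in> Inc R \<Longrightarrow> p < q \<Longrightarrow> f p < f q"
  unfolding Inc_def by blast

lemma finite_Inc:
  fixes R :: "'a::{finite,order} \<Rightarrow> int set"
  assumes "restriction R"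
  shows "finite (Inc R)"
proof -
  have "finite (\<Union>p. R p)" using assms unfolding restriction_def by simp
  then have "finite {f. \<forall>x::'a. (x \<in> UNIV \<longrightarrow> f x \<in> (\<Union>p. R p)) \<and> (x \<notin> UNIV \<longrightarrow> f x = 0)}"
    by (intro finite_set_of_finite_funs) auto
  then show ?thesis by (rule finite_subset[rotated]) (auto simp: Inc_def)
qed

lemma Inc_sup: "f \<in> Inc R \<Longrightarrow> g \<in> Inc R \<Longrightarrow> sup f g \<in> Inc R"
  by (intro IncI) (auto simp: sup_int_def max_def dest: Inc_in_R Inc_less)

lemma fun_upd_in_Inc:
  assumes "f \<in> Inc R" "v \<in> R x"
    and "\<And>y. y < x \<Longrightarrow> f y < v" "\<And>y. x < y \<Longrightarrow> v < f y"
  shows "f(x := v) \<in> Inc R"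
  using assms by (intro IncI) (auto dest: Inc_in_R Inc_less)

definition raisable :: "('a::order \<Rightarrow> int set) \<Rightarrow> ('a \<Rightarrow> int) \<Rightarrow> 'a \<Rightarrow> bool" where
  "raisable R f x \<longleftrightarrow> (\<exists>v. f x < v \<and> f(x := v) \<in> Inc R)"

text \<open>Raising f at a maximal point where it differs from g stays below g and increasing.\<close>
lemma raisable_if_less:
  fixes f g :: "'a::{finite,order} \<Rightarrow> int"
  assumes f: "f \<in> Inc R" and g: "g \<in> Inc R" and "f < g"
  shows "\<exists>x. f x < g x \<and> f(x := g x) \<in> Inc R"
proof -
  let ?S = "{y. f y < g y}"
  have "?S \<noteq> {}" using \<open>f < g\<close> by (auto simp: less_fun_def le_fun_def not_le)
  then obtain x where x: "x \<in> ?S" and max: "\<And>y. y \<in> ?S \<Longrightarrow> x \<le> y \<Longrightarrow> x = y"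
    using finite_has_maximal[of ?S] by auto
  have "f(x := g x) \<in> Inc R"
  proof (rule fun_upd_in_Inc[OF f Inc_in_R[OF g]])
    fix y assume "y < x"
    then show "f y < g x" using x Inc_less[OF f] by force
  next
    fix y assume "x < y"
    then have "\<not> f y < g y" using max[of y] by (auto dest: order.strict_implies_order)
    moreover have "f y \<le> g y" using \<open>f < g\<close> by (simp add: less_fun_def le_fun_def)
    ultimately have "f y = g y" by simp
    then show "g x < f y" using Inc_less[OF g \<open>x < y\<close>] by simp
  qed
  then show ?thesis using x by blast
qed

lemma raisable_if_not_top:
  fixes m :: "'a::{finite,order} \<Rightarrow> int"
  assumes m: "m \<in> Inc R" and f: "f \<in> Inc R" and "\<not> f \<le> m"
  shows "\<exists>x. raisable R m x \<and> m x < f x"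
proof -
  have "m < sup m f" using \<open>\<not> f \<le> m\<close> by (simp add: less_le_not_le)
  then obtain x where "m x < sup m f x" "m(x := sup m f x) \<in> Inc R"
    using raisable_if_less[OF m Inc_sup[OF m f]] by blast
  then have "m x < f x" "m(x := f x) \<in> Inc R" by (auto simp: sup_int_def max_def split: if_splits)
  then show ?thesis unfolding raisable_def by blast
qed

lemma le_if_unique_raisable:
  fixes m :: "'a::{finite,order} \<Rightarrow> int"
  assumes m: "m \<in> Inc R" and unique: "\<And>x. raisable R m x \<Longrightarrow> x = p"
    and f: "f \<in> Inc R" and "f p \<le> m p"
  shows "f \<le> m"
  using raisable_if_not_top[OF m f] unique \<open>f p \<le> m p\<close> by force

lemma meet_irreducible_iff_unique_raisable:
  fixes m :: "'a::{finite,order} \<Rightarrow> int"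
  assumes m: "m \<in> Inc R"
  shows "meet_irreducible (Inc R) m \<longleftrightarrow> (\<exists>!p. raisable R m p)"
proof
  assume mi: "meet_irreducible (Inc R) m"
  have "\<exists>p. raisable R m p"
    using mi raisable_if_not_top[OF m] unfolding meet_irreducible_def by blast
  moreover have "p = q" if "raisable R m p" "raisable R m q" for p q
  proof (rule ccontr)
    assume "p \<noteq> q"
    obtain v where v: "m p < v" "m(p := v) \<in> Inc R"
      using \<open>raisable R m p\<close> unfolding raisable_def by blast
    obtain w where w: "m q < w" "m(q := w) \<in> Inc R"
      using \<open>raisable R m q\<close> unfolding raisable_def by blast
    have "m = inf (m(p := v)) (m(q := w))"
      using v w \<open>p \<noteq> q\<close> by (simp add: fun_eq_iff inf_int_def)
    then have "m = m(p := v) \<or> m = m(q := w)"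
      using mi v w unfolding meet_irreducible_def by blast
    then show False using v w by (metis fun_upd_same order.irrefl)
  qed
  ultimately show "\<exists>!p. raisable R m p" by blast
next
  assume "\<exists>!p. raisable R m p"
  then obtain p where p: "raisable R m p" and unique: "\<And>x. raisable R m x \<Longrightarrow> x = p" by blast
  obtain v where v: "m p < v" "m(p := v) \<in> Inc R" using p unfolding raisable_def by blast
  have "\<not> m(p := v) \<le> m" using v(1) by (auto simp: le_fun_def dest: spec[of _ p])
  moreover have "m = y \<or> m = z" if "y \<in> Inc R" "z \<in> Inc R" "m = inf y z" for y z
  proof -
    have "y p \<le> m p \<or> z p \<le> m p" using \<open>m = inf y z\<close> by (auto simp: inf_fun_def)
    then have "y \<le> m \<or> z \<le> m" using le_if_unique_raisable[OF m unique] that by blast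
    moreover have "m \<le> y" "m \<le> z" using \<open>m = inf y z\<close> by simp_all
    ultimately show ?thesis by (auto intro: order.antisym)
  qed
  ultimately show "meet_irreducible (Inc R) m"
    using m v(2) unfolding meet_irreducible_def by blast
qed

lemma raisable_less_Max:
  assumes "restriction R" "raisable R m p"
  shows "m p < Max (R p)"
proof -
  obtain v where "m p < v" "m(p := v) \<in> Inc R" using assms(2) unfolding raisable_def by blast
  then show ?thesis using restriction_Min_Max(4)[OF assms(1), of v p] Inc_in_R[of "m(p := v)" R p] by simp
qed

lemma finite_sup_closed_has_greatest:
  fixes S :: "'b::semilattice_sup set"
  assumes "finite S" "S \<noteq> {}" and closed: "\<And>x y. x \<in> S \<Longrightarrow> y \<in> S \<Longrightarrow> sup x y \<in> S"
  obtains m where "m \<in> S" "\<And>f. f \<in> S \<Longrightarrow> f \<le> m"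
proof -
  obtain m where m: "m \<in> S" and max: "\<And>f. f \<in> S \<Longrightarrow> m \<le> f \<Longrightarrow> m = f"
    using finite_has_maximal[OF assms(1,2)] by blast
  have "f \<le> m" if "f \<in> S" for f
    using max[of "sup m f"] closed[OF m that] by (metis sup.cobounded1 sup.cobounded2)
  then show thesis using m that by blast
qed

lemma Inc_with_value_and_top_above:
  fixes R :: "'a::{finite,order} \<Rightarrow> int set"
  assumes R: "restriction R" "consistent R" and k: "k \<in> R p"
  shows "\<exists>f\<in>Inc R. f p = k \<and> (\<forall>y. p < y \<longrightarrow> f y = Max (R y))"
proof -
  define f where "f y = (if y = p then k else if p < y then Max (R y) else Min (R y))" for y
  note MinMax = restriction_Min_Max[OF R(1)]
  have "f \<in> Inc R"
  proof (rule IncI)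
    fix y
    show "f y \<in> R y" using MinMax k by (simp add: f_def)
  next
    fix x y :: 'a
    assume "x < y"
    note less = consistent_Min_less[OF R(2) \<open>x < y\<close>] consistent_Max_less[OF R(2) \<open>x < y\<close>]
    show "f x < f y"
    proof (cases "x = p \<or> p < x")
      case True
      then have "p < y" using \<open>x < y\<close> by auto
      then show ?thesis
        using True less MinMax(4)[OF k] consistent_Max_less[OF R(2) \<open>p < y\<close>] by (auto simp: f_def)
    next
      case False
      then have "y = p \<Longrightarrow> x < p" using \<open>x < y\<close> by simp
      then show ?thesis
        using False less MinMax(3)[OF k] MinMax(3)[OF MinMax(2)[of y]] consistent_Min_less[OF R(2), of x p]
        by (auto simp: f_def)
    qed
  qed
  then show ?thesis by (intro bexI[of _ f]) (auto simp: f_def)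
qed

lemma Inc_has_greatest_below:
  fixes R :: "'a::{finite,order} \<Rightarrow> int set"
  assumes "restriction R" "consistent R" "k \<in> R p"
  obtains m where "m \<in> Inc R" "m p \<le> k" "\<And>f. f \<in> Inc R \<Longrightarrow> f p \<le> k \<Longrightarrow> f \<le> m"
proof (rule finite_sup_closed_has_greatest[of "{f \<in> Inc R. f p \<le> k}"])
  show "finite {f \<in> Inc R. f p \<le> k}" using finite_Inc[OF assms(1)] by simp
  show "{f \<in> Inc R. f p \<le> k} \<noteq> {}" using Inc_with_value_and_top_above[OF assms] by force
  show "sup f g \<in> {f \<in> Inc R. f p \<le> k}" if "f \<in> {f \<in> Inc R. f p \<le> k}" "g \<in> {f \<in> Inc R. f p \<le> k}" for f g
    using that Inc_sup[of f R g] by simp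
qed (use that in blast)

text \<open>Raising m at any x \<noteq> p would give an element of the same set above m. At p,
  m can be raised to Max (R p) because m dominates the witness of
  Inc_with_value_and_top_above and is therefore maximal strictly above p.\<close>
lemma greatest_below_raisable_only_at:
  fixes R :: "'a::{finite,order} \<Rightarrow> int set"
  assumes R: "restriction R" "consistent R" and k: "k \<in> R p" "k < Max (R p)"
    and m: "m \<in> Inc R" "m p \<le> k" and greatest: "\<And>f. f \<in> Inc R \<Longrightarrow> f p \<le> k \<Longrightarrow> f \<le> m"
  shows "m p = k" "raisable R m p" "\<And>x. raisable R m x \<Longrightarrow> x = p"
proof -
  obtain f where f: "f \<in> Inc R" "f p = k" and top: "\<And>y. p < y \<Longrightarrow> f y = Max (R y)"
    using Inc_with_value_and_top_above[OF R k(1)] by blast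
  have "f \<le> m" using greatest f by simp
  then show "m p = k" using m(2) f(2) by (auto simp: le_fun_def dest: spec[of _ p])
  have "m y = Max (R y)" if "p < y" for y
    using le_funD[OF \<open>f \<le> m\<close>, of y] top[OF that] restriction_Min_Max(4)[OF R(1) Inc_in_R[OF m(1)]]
    by (simp add: order.antisym)
  then have "m(p := Max (R p)) \<in> Inc R"
    using \<open>m p = k\<close> k(2) Inc_less[OF m(1)] consistent_Max_less[OF R(2)]
    by (intro fun_upd_in_Inc[OF m(1) restriction_Min_Max(2)[OF R(1)]]) force+
  then show "raisable R m p" using \<open>m p = k\<close> k(2) unfolding raisable_def by blast
  show "x = p" if rx: "raisable R m x" for x
  proof (rule ccontr)
    assume "x \<noteq> p"
    obtain v where "m x < v" "m(x := v) \<in> Inc R" using rx unfolding raisable_def by blast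
    then have "m(x := v) \<le> m" using greatest \<open>x \<noteq> p\<close> m(2) by simp
    then show False using \<open>m x < v\<close> by (auto simp: le_fun_def dest: spec[of _ x])
  qed
qed

definition raisable_point :: "('a::order \<Rightarrow> int set) \<Rightarrow> ('a \<Rightarrow> int) \<Rightarrow> 'a" where
  "raisable_point R m = (THE p. raisable R m p)"

definition greatest_below :: "('a::order \<Rightarrow> int set) \<Rightarrow> 'a \<Rightarrow> int \<Rightarrow> ('a \<Rightarrow> int)" where
  "greatest_below R p k = (GREATEST f. f \<in> Inc R \<and> f p \<le> k)"

lemma meet_irreducible_raisable_point:
  fixes m :: "'a::{finite,order} \<Rightarrow> int"
  assumes mi: "meet_irreducible (Inc R) m"
  shows "m \<in> Inc R" "raisable R m (raisable_point R m)"
    "\<And>x. raisable R m x \<Longrightarrow> x = raisable_point R m"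
proof -
  show m: "m \<in> Inc R" using mi unfolding meet_irreducible_def by blast
  obtain p where p: "raisable R m p" "\<And>x. raisable R m x \<Longrightarrow> x = p"
    using mi meet_irreducible_iff_unique_raisable[OF m] by blast
  have "raisable_point R m = p" unfolding raisable_point_def using p by (rule the_equality)
  then show "raisable R m (raisable_point R m)" "\<And>x. raisable R m x \<Longrightarrow> x = raisable_point R m"
    using p by blast+
qed

lemma greatest_below_eqI:
  assumes "m \<in> Inc R" "m p \<le> k" "\<And>f. f \<in> Inc R \<Longrightarrow> f p \<le> k \<Longrightarrow> f \<le> m"
  shows "greatest_below R p k = m"
  unfolding greatest_below_def by (rule Greatest_equality) (use assms in blast)+

lemma greatest_below_raisable_point:
  fixes m :: "'a::{finite,order} \<Rightarrow> int"
  assumes "meet_irreducible (Inc R) m"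
  shows "greatest_below R (raisable_point R m) (m (raisable_point R m)) = m"
  using meet_irreducible_raisable_point[OF assms]
  by (blast intro: greatest_below_eqI le_if_unique_raisable)

lemma meet_irreducible_value_not_Max:
  fixes m :: "'a::{finite,order} \<Rightarrow> int"
  assumes "restriction R" "meet_irreducible (Inc R) m"
  shows "m (raisable_point R m) \<in> R (raisable_point R m) - {Max (R (raisable_point R m))}"
  using Inc_in_R[OF meet_irreducible_raisable_point(1)[OF assms(2)]]
    raisable_less_Max[OF assms(1) meet_irreducible_raisable_point(2)[OF assms(2)]] by simp

lemma greatest_below_meet_irreducible:
  fixes R :: "'a::{finite,order} \<Rightarrow> int set"
  assumes R: "restriction R" "consistent R" and k: "k \<in> R p" "k \<noteq> Max (R p)"
  shows "meet_irreducible (Inc R) (greatest_below R p k)"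
    "raisable_point R (greatest_below R p k) = p" "greatest_below R p k p = k"
proof -
  have "k < Max (R p)" using k restriction_Min_Max(4)[OF R(1)] by force
  obtain m where m: "m \<in> Inc R" "m p \<le> k" "\<And>f. f \<in> Inc R \<Longrightarrow> f p \<le> k \<Longrightarrow> f \<le> m"
    using Inc_has_greatest_below[OF R k(1)] by blast
  note raisable = greatest_below_raisable_only_at[OF R k(1) \<open>k < Max (R p)\<close> m]
  have mi: "meet_irreducible (Inc R) m"
    using meet_irreducible_iff_unique_raisable[OF m(1)] raisable(2,3) by blast
  moreover have "raisable_point R m = p"
    using meet_irreducible_raisable_point(3)[OF mi raisable(2)] by simp
  ultimately show "meet_irreducible (Inc R) (greatest_below R p k)"
    "raisable_point R (greatest_below R p k) = p" "greatest_below R p k p = k"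
    using greatest_below_eqI[OF m] raisable(1) by simp_all
qed

theorem proposition2p9:
  fixes R :: "'a::{finite,order} \<Rightarrow> int set"
  assumes "restriction R"
    and "consistent R"
  shows "\<exists>h. bij_betw h {x. meet_irreducible (Inc R) x}
                        {(p, k). k \<in> R p - {Max (R p)}}"
proof
  let ?h = "\<lambda>m. (raisable_point R m, m (raisable_point R m))"
  show "bij_betw ?h {x. meet_irreducible (Inc R) x} {(p, k). k \<in> R p - {Max (R p)}}"
  proof (rule bij_betw_byWitness[where f' = "\<lambda>(p, k). greatest_below R p k"])
    show "\<forall>m\<in>{x. meet_irreducible (Inc R) x}. (\<lambda>(p, k). greatest_below R p k) (?h m) = m"
      by (simp add: greatest_below_raisable_point)
    show "\<forall>a\<in>{(p, k). k \<in> R p - {Max (R p)}}. ?h ((\<lambda>(p, k). greatest_below R p k) a) = a"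
      using greatest_below_meet_irreducible(2,3)[OF assms] by auto
    show "(\<lambda>(p, k). greatest_below R p k) ` {(p, k). k \<in> R p - {Max (R p)}}
        \<subseteq> {x. meet_irreducible (Inc R) x}"
      using greatest_below_meet_irreducible(1)[OF assms] by auto
    show "?h ` {x. meet_irreducible (Inc R) x} \<subseteq> {(p, k). k \<in> R p - {Max (R p)}}"
      using meet_irreducible_value_not_Max[OF assms(1)] by auto
  qed
qed

end
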